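(* Let $q\ge1$ be an integer. Suppose there are pairwise disjoint Borel sets $K_0,K_1,K_2$ with $K_0\cup K_1\cup K_2=[0,1)$ and constants $\varepsilon,\delta>0$ such that: (i) for each $x\in K_0$, $e(q,x;\varepsilon,\delta)=1$; (ii) for each $x\in K_1$ there exist $\mathbf{a}_x,\mathbf{b}_x\in\mathcal{A}^q$ with $x(\mathbf{a}_x),x(\mathbf{b}_x)\in K_0$ such that $(\mathbf{a}_x,\mathbf{b}_x)$ and $(\mathbf{b}_x,\mathbf{a}_x)$ are the only possible pairs $(\mathbf{u},\mathbf{v})$ with $\mathbf{u}\ne\mathbf{v}$ in $E(q,x;\varepsilon,\delta)$; (iii) for each $x\in K_2$ there exist $\mathbf{a}_x,\mathbf{b}_x,\mathbf{c}_x\in\mathcal{A}^q$ with $x(\mathbf{a}_x),x(\mathbf{b}_x)\in K_0$ and $x(\mathbf{c}_x)\in K_1$ such that $(\mathbf{a}_x,\mathbf{b}_x),(\mathbf{a}_x,\mathbf{c}_x),(\mathbf{b}_x,\mathbf{a}_x),(\mathbf{c}_x,\mathbf{a}_x)$ are the only possible pairs $(\mathbf{u},\mathbf{v})$ with $\mathbf{u}\ne\mathbf{v}$ in $E(q,x;\varepsilon,\delta)$. Then $\sigma(q)\le t<1.61$, where $t>1$ is the unique solution of $\frac{1}{t^2-1}+\frac{2}{t^3-2}+1=t^2$.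
   Context: Standing setup: $b\ge2$ integer, $\mathcal{A}=\{0,\dots,b-1\}$, $\gamma\in(1/b,1)$, $\psi$ a $\mathbb{Z}$-periodic $C^1$ function. $S(x,\mathbf{i})=\sum_{n\ge1}\gamma^{n-1}\psi\big(\frac{x+i_1+i_2b+\cdots+i_nb^{n-1}}{b^n}\big)$, $S'=\partial_xS$. For $\mathbf{u}\in\mathcal{A}^q$, $x(\mathbf{u})=(x+u_1+u_2b+\cdots+u_qb^{q-1})/b^q$. Sequences $\mathbf{i},\mathbf{j}$ are $(\varepsilon,\delta)$-tangent at $x_0$ if $|S(x_0,\mathbf{i})-S(x_0,\mathbf{j})|\le\varepsilon$ and $|S'(x_0,\mathbf{i})-S'(x_0,\mathbf{j})|\le\delta$. $E(q,x_0;\varepsilon,\delta)$: pairs $(\mathbf{k},\mathbf{l})\in\mathcal{A}^q\times\mathcal{A}^q$ such that some concatenations $\mathbf{ku},\mathbf{lv}$ are $(\varepsilon,\delta)$-tangent at $x_0$; $e(q,x_0;\varepsilon,\delta)=\max_{\mathbf{k}}\#\{\mathbf{l}:(\mathbf{k},\mathbf{l})\in E(q,x_0;\varepsilon,\delta)\}$. Weight function: measurable $\omega:[0,1)\to(0,\infty)$ with $\omega,1/\omega$ bounded. Admissible testing function of order $q$: measurable $V:[0,1)\times\mathcal{A}^q\times\mathcal{A}^q\to[0,\infty)$ such that for some $\varepsilon,\delta>0$, $V(x,\mathbf{u},\mathbf{v})V(x,\mathbf{v},\mathbf{u})\ge1$ whenever $x\in[0,1)$ and $(\mathbf{u},\mathbf{v})\in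 E(q,x;\varepsilon,\delta)$. $\Sigma_{V,\omega}(x)=\sup_{\mathbf{u}}\frac{\omega(x)}{\omega(x(\mathbf{u}))}\sum_{\mathbf{v}}V(x,\mathbf{u},\mathbf{v})$; $\sigma(q)=\inf_{\omega,V}\|\Sigma_{V,\omega}\|_\infty$. *)

theory Defs
  imports "HOL-Analysis.Analysis" "HOL-Probability.Essential_Supremum"
begin

definition standing :: "nat \<Rightarrow> real \<Rightarrow> (real \<Rightarrow> real) \<Rightarrow> bool" where
  "standing b \<gamma> \<psi> \<longleftrightarrow> b \<ge> 2 \<and> 1 / real b < \<gamma> \<and> \<gamma> < 1 \<and>
     (\<forall>x. \<psi> (x + 1) = \<psi> x) \<and>
     (\<exists>\<psi>'. continuous_on UNIV \<psi>' \<and> (\<forall>x. (\<psi> has_real_derivative \<psi>' x) (at x)))"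

text \<open>Infinite sequences over the alphabet {0..b-1}, indexed from 0 (i 0 = i_1).\<close>
definition seqs :: "nat \<Rightarrow> (nat \<Rightarrow> nat) set" where
  "seqs b = {i. \<forall>n. i n < b}"

definition words :: "nat \<Rightarrow> nat \<Rightarrow> nat list set" where
  "words b q = {u. length u = q \<and> set u \<subseteq> {..<b}}"

definition S :: "nat \<Rightarrow> real \<Rightarrow> (real \<Rightarrow> real) \<Rightarrow> real \<Rightarrow> (nat \<Rightarrow> nat) \<Rightarrow> real" where
  "S b \<gamma> \<psi> x i = (\<Sum>n. \<gamma> ^ n * \<psi> ((x + (\<Sum>k\<le>n. real (i k) * real b ^ k)) / real b ^ Suc n))"

definition S' :: "nat \<Rightarrow> real \<Rightarrow> (real \<Rightarrow> real) \<Rightarrow> real \<Rightarrow> (nat \<Rightarrow> nat) \<Rightarrow> real" where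
  "S' b \<gamma> \<psi> x i = deriv (\<lambda>y. S b \<gamma> \<psi> y i) x"

definition xw :: "nat \<Rightarrow> real \<Rightarrow> nat list \<Rightarrow> real" where
  "xw b x u = (x + (\<Sum>k<length u. real (u ! k) * real b ^ k)) / real b ^ length u"

definition cat :: "nat list \<Rightarrow> (nat \<Rightarrow> nat) \<Rightarrow> (nat \<Rightarrow> nat)" where
  "cat k u = (\<lambda>n. if n < length k then k ! n else u (n - length k))"

definition tangent :: "nat \<Rightarrow> real \<Rightarrow> (real \<Rightarrow> real) \<Rightarrow> real \<Rightarrow> real \<Rightarrow> real
    \<Rightarrow> (nat \<Rightarrow> nat) \<Rightarrow> (nat \<Rightarrow> nat) \<Rightarrow> bool" where
  "tangent b \<gamma> \<psi> \<epsilon> \<delta> x0 i j \<longleftrightarrow>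
     \<bar>S b \<gamma> \<psi> x0 i - S b \<gamma> \<psi> x0 j\<bar> \<le> \<epsilon> \<and> \<bar>S' b \<gamma> \<psi> x0 i - S' b \<gamma> \<psi> x0 j\<bar> \<le> \<delta>"

definition Eset :: "nat \<Rightarrow> real \<Rightarrow> (real \<Rightarrow> real) \<Rightarrow> nat \<Rightarrow> real \<Rightarrow> real \<Rightarrow> real
    \<Rightarrow> (nat list \<times> nat list) set" where
  "Eset b \<gamma> \<psi> q x0 \<epsilon> \<delta> = {(k, l). k \<in> words b q \<and> l \<in> words b q \<and>
     (\<exists>u\<in>seqs b. \<exists>v\<in>seqs b. tangent b \<gamma> \<psi> \<epsilon> \<delta> x0 (cat k u) (cat l v))}"

definition e :: "nat \<Rightarrow> real \<Rightarrow> (real \<Rightarrow> real) \<Rightarrow> nat \<Rightarrow> real \<Rightarrow> real \<Rightarrow> real \<Rightarrow> nat" where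
  "e b \<gamma> \<psi> q x0 \<epsilon> \<delta> =
     Max ((\<lambda>k. card {l. (k, l) \<in> Eset b \<gamma> \<psi> q x0 \<epsilon> \<delta>}) ` words b q)"

definition weight :: "(real \<Rightarrow> real) \<Rightarrow> bool" where
  "weight \<omega> \<longleftrightarrow> \<omega> \<in> borel_measurable (restrict_space borel {0..<1}) \<and>
     (\<forall>x\<in>{0..<1}. \<omega> x > 0) \<and> (\<exists>M. \<forall>x\<in>{0..<1}. \<omega> x \<le> M \<and> 1 / \<omega> x \<le> M)"

definition admissible :: "nat \<Rightarrow> real \<Rightarrow> (real \<Rightarrow> real) \<Rightarrow> nat
    \<Rightarrow> (real \<Rightarrow> nat list \<Rightarrow> nat list \<Rightarrow> real) \<Rightarrow> bool" where
  "admissible b \<gamma> \<psi> q V \<longleftrightarrow>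
     (\<forall>u\<in>words b q. \<forall>v\<in>words b q.
        (\<lambda>x. V x u v) \<in> borel_measurable (restrict_space borel {0..<1})) \<and>
     (\<forall>x\<in>{0..<1}. \<forall>u\<in>words b q. \<forall>v\<in>words b q. V x u v \<ge> 0) \<and>
     (\<exists>\<epsilon>>0. \<exists>\<delta>>0. \<forall>x\<in>{0..<1}. \<forall>(u, v)\<in>Eset b \<gamma> \<psi> q x \<epsilon> \<delta>. V x u v * V x v u \<ge> 1)"

definition SigmaVw :: "nat \<Rightarrow> nat \<Rightarrow> (real \<Rightarrow> nat list \<Rightarrow> nat list \<Rightarrow> real) \<Rightarrow> (real \<Rightarrow> real)
    \<Rightarrow> real \<Rightarrow> real" where
  "SigmaVw b q V \<omega> x =
     Max ((\<lambda>u. \<omega> x / \<omega> (xw b x u) * (\<Sum>v\<in>words b q. V x u v)) ` words b q)"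

definition sigma :: "nat \<Rightarrow> real \<Rightarrow> (real \<Rightarrow> real) \<Rightarrow> nat \<Rightarrow> ereal" where
  "sigma b \<gamma> \<psi> q = Inf {esssup (restrict_space lborel {0..<1}) (\<lambda>x. ereal (SigmaVw b q V \<omega> x)) | \<omega> V.
      weight \<omega> \<and> admissible b \<gamma> \<psi> q V}"

end

theory Submission
  imports Defs
begin

(* With the weight \<omega> equal to 1, t/2 and 1/t on K0, K1 and K2, one takes V equal to 1 on the
   diagonal and on tangent pairs away from K2, and on K2 chooses the two reciprocal pairs of
   weights so that products over tangent pairs are 1. Row by row, \<Sigma>_{V,\<omega>} \<le> t then reduces to
   2 \<le> t\<^sup>2, t \<le> 2 and the equation 1 + 1/(t\<^sup>2-1) + 2/(t\<^sup>3-2) = t\<^sup>2 defining t, whose unique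
   root above 2^(1/3) lies in [1.6, 1.61) because the left side minus t\<^sup>2 is strictly decreasing.
   Measurability of V holds because sequences range over a compact space, so the set of points
   where two words have tangent continuations is a countable union of projections of compact sets. *)

lemma standingE:
  assumes "standing b \<gamma> \<psi>"
  obtains \<psi>' where "\<And>x. (\<psi> has_real_derivative \<psi>' x) (at x)" "continuous_on UNIV \<psi>'"
    and "1 \<le> b" "0 \<le> \<gamma>" "\<gamma> < 1"
proof -
  have "\<exists>\<psi>'. continuous_on UNIV \<psi>' \<and> (\<forall>x. (\<psi> has_real_derivative \<psi>' x) (at x))"
    and b: "2 \<le> b" and \<gamma>: "1 / real b < \<gamma>" "\<gamma> < 1"
    using assms by (simp_all add: standing_def)
  then obtain \<psi>' where \<psi>': "\<And>x. (\<psi> has_real_derivative \<psi>' x) (at x)" "continuous_on UNIV \<psi>'"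
    by blast
  have "0 < 1 / real b" using b by simp
  then have "1 \<le> b" "0 \<le> \<gamma>" using b \<gamma>(1) by linarith+
  from \<psi>' this \<gamma>(2) show ?thesis by (rule that)
qed

definition S_arg :: "nat \<Rightarrow> nat \<Rightarrow> real \<Rightarrow> (nat \<Rightarrow> nat) \<Rightarrow> real" where
  "S_arg b n x i = (x + (\<Sum>k\<le>n. real (i k) * real b ^ k)) / real b ^ Suc n"

lemma S_eq_S_arg: "S b \<gamma> \<psi> x i = (\<Sum>n. \<gamma> ^ n * \<psi> (S_arg b n x i))"
  unfolding S_def S_arg_def by simp

lemma digit_sum_le:
  assumes "\<And>k. k < n \<Longrightarrow> f k < b"
  shows "(\<Sum>k<n. real (f k) * real b ^ k) \<le> real b ^ n - 1"
  using assms
proof (induction n)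
  case (Suc n)
  have "real (f n) \<le> real b - 1"
    using Suc.prems[of n] by (simp add: of_nat_diff[symmetric] less_imp_le_nat Suc_leI)
  then have "real (f n) * real b ^ n \<le> (real b - 1) * real b ^ n"
    by (intro mult_right_mono) auto
  with Suc show ?case by (simp add: algebra_simps)
qed simp

lemma S_arg_bounds:
  assumes "i \<in> seqs b" "b \<ge> 1" "\<bar>x\<bar> \<le> R"
  shows "S_arg b n x i \<in> {-R..R+1}"
proof -
  define T where "T = (\<Sum>k\<le>n. real (i k) * real b ^ k)"
  define B where "B = real b ^ Suc n"
  have B: "B \<ge> 1" unfolding B_def using assms(2) by (intro one_le_power) simp
  have "0 \<le> T" unfolding T_def by (intro sum_nonneg) auto
  moreover have "T \<le> B - 1"
    using digit_sum_le[of "Suc n" i b] assms(1) unfolding T_def B_def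
    by (simp add: seqs_def lessThan_Suc_atMost)
  ultimately have "0 \<le> T / B" "T / B \<le> 1" using B by (auto simp: divide_le_eq)
  moreover have "\<bar>x / B\<bar> \<le> R"
    using B assms(3) by (simp add: abs_divide divide_le_eq) (smt (verit) mult_le_cancel_left1)
  ultimately have "- R \<le> x / B + T / B \<and> x / B + T / B \<le> R + 1"
    by (simp only: abs_le_iff) linarith
  then show ?thesis unfolding S_arg_def T_def[symmetric] B_def[symmetric] by (simp add: add_divide_distrib)
qed

lemma continuous_on_S_series:
  fixes \<phi> :: "real \<Rightarrow> real" and w :: "nat \<Rightarrow> real"
  assumes \<phi>: "continuous_on UNIV \<phi>" and w: "summable (\<lambda>n. \<bar>w n\<bar>)" and b: "b \<ge> 1"
  shows "continuous_on (cball 0 R \<times> seqs b) (\<lambda>z. \<Sum>n. w n * \<phi> (S_arg b n (fst z) (snd z)))"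
proof -
  obtain B where B: "\<And>y. y \<in> {-R..R+1} \<Longrightarrow> norm (\<phi> y) \<le> B"
    using continuous_on_compact_bound[OF compact_Icc continuous_on_subset[OF \<phi> subset_UNIV]] by metis
  let ?A = "cball 0 R \<times> seqs b"
  have lim: "uniform_limit ?A (\<lambda>n z. \<Sum>j<n. w j * \<phi> (S_arg b j (fst z) (snd z)))
     (\<lambda>z. \<Sum>n. w n * \<phi> (S_arg b n (fst z) (snd z))) sequentially"
  proof (rule Weierstrass_m_test)
    fix n and z :: "real \<times> (nat \<Rightarrow> nat)" assume "z \<in> ?A"
    then have "norm (\<phi> (S_arg b n (fst z) (snd z))) \<le> B"
      using b by (intro B S_arg_bounds) (auto simp: mem_cball dist_real_def)
    then show "norm (w n * \<phi> (S_arg b n (fst z) (snd z))) \<le> \<bar>w n\<bar> * B"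
      by (simp add: abs_mult mult_left_mono)
  qed (rule summable_mult2[OF w])
  have "continuous_on ?A (\<lambda>z. \<Sum>j<n. w j * \<phi> (S_arg b j (fst z) (snd z)))" for n
    unfolding S_arg_def using b
    by (intro continuous_intros continuous_on_compose2[OF \<phi>]
          continuous_on_product_then_coordinatewise[OF continuous_on_snd]) auto
  then show ?thesis by (intro uniform_limit_theorem[OF _ lim] always_eventually) auto
qed

lemma S_has_real_derivative:
  fixes \<psi> \<psi>' :: "real \<Rightarrow> real"
  assumes b: "b \<ge> 1" and \<gamma>: "0 \<le> \<gamma>" "\<gamma> < 1"
    and \<psi>: "\<And>x. (\<psi> has_real_derivative \<psi>' x) (at x)" "continuous_on UNIV \<psi>'"
    and i: "i \<in> seqs b"
  shows "((\<lambda>y. S b \<gamma> \<psi> y i) has_real_derivative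
           (\<Sum>n. \<gamma> ^ n / real b ^ Suc n * \<psi>' (S_arg b n x i))) (at x)"
proof -
  define R where "R = \<bar>x\<bar> + 1"
  have \<psi>_cont: "continuous_on UNIV \<psi>"
    by (intro continuous_at_imp_continuous_on ballI DERIV_isCont[OF \<psi>(1)])
  obtain C where C: "\<And>y. y \<in> {-R..R+1} \<Longrightarrow> \<bar>\<psi> y\<bar> \<le> C"
    using continuous_on_compact_bound[OF compact_Icc continuous_on_subset[OF \<psi>_cont subset_UNIV]]
    by (metis real_norm_def)
  obtain C' where C': "\<And>y. y \<in> {-R..R+1} \<Longrightarrow> \<bar>\<psi>' y\<bar> \<le> C'"
    using continuous_on_compact_bound[OF compact_Icc continuous_on_subset[OF \<psi>(2) subset_UNIV]]
    by (metis real_norm_def)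
  define f where "f n y = \<gamma> ^ n * \<psi> (S_arg b n y i)" for n y
  define f' where "f' n y = \<gamma> ^ n / real b ^ Suc n * \<psi>' (S_arg b n y i)" for n y
  have arg: "S_arg b n y i \<in> {-R..R+1}" if "y \<in> ball 0 R" for n y
    using that by (intro S_arg_bounds[OF i b]) (auto simp: dist_real_def)
  have power_b: "real b ^ Suc n \<ge> 1" for n using b by (intro one_le_power) simp
  have "(f n has_field_derivative f' n y) (at y within ball 0 R)" for n y
  proof -
    have "((\<lambda>y. S_arg b n y i) has_real_derivative 1 / real b ^ Suc n) (at y)"
      unfolding S_arg_def using b by (auto intro!: derivative_eq_intros simp: field_simps)
    from DERIV_cmult[OF DERIV_chain2[OF \<psi>(1) this], of "\<gamma> ^ n"]
    show ?thesis unfolding f_def f'_def by (auto intro: has_field_derivative_at_within simp: field_simps)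
  qed
  moreover have "uniformly_convergent_on (ball 0 R) (\<lambda>n y. \<Sum>j<n. f' j y)"
  proof (rule Weierstrass_m_test')
    fix n and y :: real assume y: "y \<in> ball 0 R"
    have "\<bar>\<psi>' (S_arg b n y i)\<bar> / real b ^ Suc n \<le> C'"
      using C'[OF arg[OF y]] power_b[of n] by (smt (verit) divide_le_eq mult_le_cancel_left1)
    moreover have "norm (f' n y) = \<gamma> ^ n * (\<bar>\<psi>' (S_arg b n y i)\<bar> / real b ^ Suc n)"
      unfolding f'_def using \<gamma> by (simp add: abs_mult)
    ultimately show "norm (f' n y) \<le> \<gamma> ^ n * C'"
      using \<gamma> by (metis mult_left_mono zero_le_power)
  qed (use \<gamma> in \<open>auto intro: summable_mult2 summable_geometric\<close>)
  moreover have x: "x \<in> ball 0 R" by (simp add: R_def)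
  moreover have "summable (\<lambda>n. f n x)"
    by (rule summable_comparison_test'[of "\<lambda>n. \<gamma> ^ n * C"])
       (use \<gamma> C[OF arg[OF x]] in \<open>auto intro: summable_mult2 summable_geometric
          simp: f_def abs_mult mult_left_mono\<close>)
  ultimately have "((\<lambda>y. \<Sum>n. f n y) has_field_derivative (\<Sum>n. f' n x)) (at x)"
    by (intro has_field_derivative_series'(2)[OF convex_ball]) (auto simp: R_def)
  then show ?thesis unfolding f_def f'_def S_eq_S_arg .
qed

lemma S'_eq_series:
  fixes \<psi> \<psi>' :: "real \<Rightarrow> real"
  assumes "b \<ge> 1" "0 \<le> \<gamma>" "\<gamma> < 1"
    and "\<And>x. (\<psi> has_real_derivative \<psi>' x) (at x)" "continuous_on UNIV \<psi>'"
    and "i \<in> seqs b"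
  shows "S' b \<gamma> \<psi> x i = (\<Sum>n. \<gamma> ^ n / real b ^ Suc n * \<psi>' (S_arg b n x i))"
  unfolding S'_def by (rule DERIV_imp_deriv[OF S_has_real_derivative[OF assms]])

lemma compact_seqs: "compact (seqs b)"
proof -
  have "seqs b = PiE UNIV (\<lambda>_. {..<b})"
    by (auto simp: seqs_def PiE_def Pi_def extensional_def)
  moreover have "compactin (product_topology (\<lambda>_. euclidean) UNIV) (PiE UNIV (\<lambda>_::nat. {..<b}))"
    by (subst compactin_PiE) (auto intro: finite_imp_compact)
  ultimately show ?thesis by (simp add: euclidean_product_topology compactin_euclidean_iff)
qed

lemma cat_in_seqs: "k \<in> words b q \<Longrightarrow> u \<in> seqs b \<Longrightarrow> cat k u \<in> seqs b"
  by (auto simp: cat_def seqs_def words_def subset_iff)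

lemma continuous_on_cat:
  assumes "continuous_on A g"
  shows "continuous_on A (\<lambda>z. cat k (g z))"
proof (rule continuous_on_coordinatewise_then_product)
  fix n
  show "continuous_on A (\<lambda>z. cat k (g z) n)"
    using continuous_on_product_then_coordinatewise[OF assms, of "n - length k"]
    by (cases "n < length k") (simp_all add: cat_def)
qed

lemma continuous_on_S:
  assumes "b \<ge> 1" "0 \<le> \<gamma>" "\<gamma> < 1" "continuous_on UNIV \<psi>"
  shows "continuous_on (cball 0 R \<times> seqs b) (\<lambda>z. S b \<gamma> \<psi> (fst z) (snd z))"
  unfolding S_eq_S_arg using assms
  by (intro continuous_on_S_series) (auto intro: summable_geometric)

lemma continuous_on_S':
  fixes \<psi> \<psi>' :: "real \<Rightarrow> real"
  assumes b: "b \<ge> 1" and \<gamma>: "0 \<le> \<gamma>" "\<gamma> < 1"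
    and \<psi>: "\<And>x. (\<psi> has_real_derivative \<psi>' x) (at x)" "continuous_on UNIV \<psi>'"
  shows "continuous_on (cball 0 R \<times> seqs b) (\<lambda>z. S' b \<gamma> \<psi> (fst z) (snd z))"
proof -
  have "summable (\<lambda>n. \<bar>\<gamma> ^ n / real b ^ Suc n\<bar>)"
  proof (rule summable_comparison_test'[of "\<lambda>n. \<gamma> ^ n"])
    fix n
    have "real b ^ Suc n \<ge> 1" using b by (intro one_le_power) simp
    then show "norm \<bar>\<gamma> ^ n / real b ^ Suc n\<bar> \<le> \<gamma> ^ n"
      using \<gamma> by (simp add: divide_le_eq mult_le_cancel_left1)
  qed (use \<gamma> in \<open>simp add: summable_geometric\<close>)
  then have "continuous_on (cball 0 R \<times> seqs b)
      (\<lambda>z. \<Sum>n. \<gamma> ^ n / real b ^ Suc n * \<psi>' (S_arg b n (fst z) (snd z)))"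
    by (rule continuous_on_S_series[OF \<psi>(2) _ b])
  then show ?thesis
    by (rule continuous_on_cong[THEN iffD1, rotated 2])
       (auto simp: S'_eq_series[OF b \<gamma> \<psi>])
qed

lemma continuous_on_compose_cat:
  assumes F: "continuous_on (cball 0 R \<times> seqs b) (\<lambda>p. F (fst p) (snd p))"
    and k: "k \<in> words b q" and g: "continuous_on A g" "g ` A \<subseteq> seqs b"
    and A: "fst ` A \<subseteq> cball 0 R"
  shows "continuous_on A (\<lambda>z. F (fst z) (cat k (g z)))"
proof -
  have "continuous_on A (\<lambda>z. (fst z, cat k (g z)))"
    by (intro continuous_intros continuous_on_cat g(1))
  moreover have "(\<lambda>z. (fst z, cat k (g z))) ` A \<subseteq> cball 0 R \<times> seqs b"
    using A g(2) cat_in_seqs[OF k] by force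
  ultimately show ?thesis using continuous_on_compose2[OF F] by force
qed

lemma compact_tangent_continuations:
  fixes \<psi> \<psi>' :: "real \<Rightarrow> real" and R :: real
  assumes b: "b \<ge> 1" and \<gamma>: "0 \<le> \<gamma>" "\<gamma> < 1"
    and \<psi>: "\<And>x. (\<psi> has_real_derivative \<psi>' x) (at x)" "continuous_on UNIV \<psi>'"
    and k: "k \<in> words b q" and l: "l \<in> words b q"
  shows "compact {z \<in> cball 0 R \<times> seqs b \<times> seqs b.
    tangent b \<gamma> \<psi> \<epsilon> \<delta> (fst z) (cat k (fst (snd z))) (cat l (snd (snd z)))}"
proof -
  define D where "D = cball (0::real) R \<times> seqs b \<times> seqs b"
  define G where
    "G f z = f b \<gamma> \<psi> (fst z) (cat k (fst (snd z))) - f b \<gamma> \<psi> (fst z) (cat l (snd (snd z)))"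
    for f :: "nat \<Rightarrow> real \<Rightarrow> (real \<Rightarrow> real) \<Rightarrow> real \<Rightarrow> (nat \<Rightarrow> nat) \<Rightarrow> real" and z
  have \<psi>_cont: "continuous_on UNIV \<psi>"
    by (intro continuous_at_imp_continuous_on ballI DERIV_isCont[OF \<psi>(1)])
  have proj: "continuous_on D (\<lambda>z. fst (snd z))" "continuous_on D (\<lambda>z. snd (snd z))"
    by (intro continuous_on_fst continuous_on_snd continuous_on_id)+
  have proj_range: "(\<lambda>z. fst (snd z)) ` D \<subseteq> seqs b" "(\<lambda>z. snd (snd z)) ` D \<subseteq> seqs b"
    "fst ` D \<subseteq> cball 0 R"
    unfolding D_def by auto
  have "continuous_on D (G S)"
    unfolding G_def
    by (intro continuous_on_diff
          continuous_on_compose_cat[where q = q, OF continuous_on_S[OF b \<gamma> \<psi>_cont, of R] _ _ _ proj_range(3)]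
          k l proj proj_range)
  moreover have "continuous_on D (G S')"
    unfolding G_def
    by (intro continuous_on_diff
          continuous_on_compose_cat[where q = q, OF continuous_on_S'[OF b \<gamma> \<psi>, of R] _ _ _ proj_range(3)]
          k l proj proj_range)
  ultimately have "closedin (top_of_set D) ((D \<inter> G S -` {-\<epsilon>..\<epsilon>}) \<inter> (D \<inter> G S' -` {-\<delta>..\<delta>}))"
    by (intro closedin_Int continuous_closedin_preimage closed_atLeastAtMost)
  moreover have "compact D"
    unfolding D_def by (intro compact_Times compact_cball compact_seqs)
  moreover have "{z \<in> D. tangent b \<gamma> \<psi> \<epsilon> \<delta> (fst z) (cat k (fst (snd z))) (cat l (snd (snd z)))}
      = (D \<inter> G S -` {-\<epsilon>..\<epsilon>}) \<inter> (D \<inter> G S' -` {-\<delta>..\<delta>})"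
    unfolding G_def tangent_def by (auto simp: abs_le_iff)
  ultimately have "compact {z \<in> D. tangent b \<gamma> \<psi> \<epsilon> \<delta> (fst z) (cat k (fst (snd z))) (cat l (snd (snd z)))}"
    using closedin_compact by simp
  then show ?thesis by (simp only: D_def)
qed

lemma Eset_pair_borel:
  fixes \<psi> \<psi>' :: "real \<Rightarrow> real"
  assumes b: "b \<ge> 1" and \<gamma>: "0 \<le> \<gamma>" "\<gamma> < 1"
    and \<psi>: "\<And>x. (\<psi> has_real_derivative \<psi>' x) (at x)" "continuous_on UNIV \<psi>'"
  shows "{x. (k, l) \<in> Eset b \<gamma> \<psi> q x \<epsilon> \<delta>} \<in> sets borel"
proof (cases "k \<in> words b q \<and> l \<in> words b q")
  case False
  then have "{x. (k, l) \<in> Eset b \<gamma> \<psi> q x \<epsilon> \<delta>} = {}" by (auto simp: Eset_def)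
  then show ?thesis by simp
next
  case True
  define C where "C R = {z \<in> cball 0 (real R) \<times> seqs b \<times> seqs b.
    tangent b \<gamma> \<psi> \<epsilon> \<delta> (fst z) (cat k (fst (snd z))) (cat l (snd (snd z)))}" for R :: nat
  have "fst ` C R \<in> sets borel" for R
    unfolding C_def using True
    by (intro borel_closed compact_imp_closed compact_continuous_image continuous_intros
          compact_tangent_continuations[OF b \<gamma> \<psi>]) auto
  then have C_borel: "(\<Union>R. fst ` C R) \<in> sets borel" by (intro sets.countable_UN) auto
  have "{x. (k, l) \<in> Eset b \<gamma> \<psi> q x \<epsilon> \<delta>} = (\<Union>R. fst ` C R)"
  proof (intro equalityI subsetI)
    fix x assume "x \<in> {x. (k, l) \<in> Eset b \<gamma> \<psi> q x \<epsilon> \<delta>}"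
    then obtain u v where "u \<in> seqs b" "v \<in> seqs b" "tangent b \<gamma> \<psi> \<epsilon> \<delta> x (cat k u) (cat l v)"
      by (auto simp: Eset_def)
    moreover obtain R :: nat where "\<bar>x\<bar> \<le> real R" using real_arch_simple by blast
    ultimately have "(x, u, v) \<in> C R" by (simp add: C_def)
    then show "x \<in> (\<Union>R. fst ` C R)" by force
  next
    fix x assume "x \<in> (\<Union>R. fst ` C R)"
    then obtain R u v where "(x, u, v) \<in> C R" by force
    then have "u \<in> seqs b" "v \<in> seqs b" "tangent b \<gamma> \<psi> \<epsilon> \<delta> x (cat k u) (cat l v)"
      by (simp_all add: C_def)
    then show "x \<in> {x. (k, l) \<in> Eset b \<gamma> \<psi> q x \<epsilon> \<delta>}"
      using True unfolding Eset_def by blast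
  qed
  with C_borel show ?thesis by simp
qed

definition t_eqn :: "real \<Rightarrow> real" where
  "t_eqn s = 1 / (s\<^sup>2 - 1) + 2 / (s ^ 3 - 2) + 1 - s\<^sup>2"

lemma t_eqn_strict_antimono:
  assumes "1 < s" "2 < s ^ 3" "s < t"
  shows "t_eqn t < t_eqn s"
proof -
  have "s\<^sup>2 < t\<^sup>2" "s ^ 3 < t ^ 3" using assms by (auto intro: power_strict_mono)
  moreover have "1 < s\<^sup>2" using assms(1) by (simp add: one_less_power)
  ultimately have "1 / (t\<^sup>2 - 1) < 1 / (s\<^sup>2 - 1)" "2 / (t ^ 3 - 2) < 2 / (s ^ 3 - 2)"
    using assms(2) by (auto intro: divide_strict_left_mono)
  with \<open>s\<^sup>2 < t\<^sup>2\<close> show ?thesis unfolding t_eqn_def by linarith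
qed

lemma t_eqn_root_unique:
  assumes "1 < s" "2 < s ^ 3" "t_eqn s = 0" "1 < t" "2 < t ^ 3" "t_eqn t = 0"
  shows "s = t"
  using t_eqn_strict_antimono[of s t] t_eqn_strict_antimono[of t s] assms
  by (cases s t rule: linorder_cases) auto

lemma t_eqn_root: "\<exists>t. 8/5 \<le> t \<and> t < 1.61 \<and> t_eqn t = 0"
proof -
  have "s\<^sup>2 \<noteq> 1 \<and> s ^ 3 \<noteq> 2" if "8/5 \<le> s" for s :: real
  proof -
    have "(8/5)\<^sup>2 \<le> s\<^sup>2" "(8/5) ^ 3 \<le> s ^ 3" using that by (intro power_mono; simp)+
    then show ?thesis by (auto simp: power2_eq_square power3_eq_cube)
  qed
  then have "continuous_on {8/5..1.61} t_eqn"
    unfolding t_eqn_def by (intro continuous_intros) auto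
  moreover have "t_eqn 1.61 < 0" "0 \<le> t_eqn (8/5)"
    by (simp_all add: t_eqn_def power2_eq_square power3_eq_cube)
  ultimately obtain t where "8/5 \<le> t" "t \<le> 1.61" "t_eqn t = 0"
    using IVT2'[of t_eqn "1.61" 0 "8/5"] by auto
  moreover have "t \<noteq> 1.61"
  proof
    assume "t = 1.61"
    then show False using \<open>t_eqn 1.61 < 0\<close> \<open>t_eqn t = 0\<close> by (metis less_irrefl)
  qed
  ultimately show ?thesis by auto
qed

lemma finite_words: "finite (words b q)"
  using finite_lists_length_eq[of "{..<b}" q] by (simp add: words_def conj_commute)

lemma replicate_zero_in_words: "0 < b \<Longrightarrow> replicate q 0 \<in> words b q"
  by (auto simp: words_def)

lemma Eset_in_words: "(k, l) \<in> Eset b \<gamma> \<psi> q x \<epsilon> \<delta> \<Longrightarrow> k \<in> words b q \<and> l \<in> words b q"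
  by (auto simp: Eset_def)

lemma Eset_sym: "(k, l) \<in> Eset b \<gamma> \<psi> q x \<epsilon> \<delta> \<Longrightarrow> (l, k) \<in> Eset b \<gamma> \<psi> q x \<epsilon> \<delta>"
  unfolding Eset_def tangent_def by (auto simp: abs_minus_commute)

lemma Eset_refl:
  assumes "0 < b" "0 \<le> \<epsilon>" "0 \<le> \<delta>" "k \<in> words b q"
  shows "(k, k) \<in> Eset b \<gamma> \<psi> q x \<epsilon> \<delta>"
proof -
  have "(\<lambda>_. 0) \<in> seqs b" using assms(1) by (simp add: seqs_def)
  moreover have "tangent b \<gamma> \<psi> \<epsilon> \<delta> x (cat k (\<lambda>_. 0)) (cat k (\<lambda>_. 0))"
    using assms by (simp add: tangent_def)
  ultimately show ?thesis using assms(4) unfolding Eset_def by blast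
qed

lemma borel_measurable_SigmaVw:
  assumes "\<omega> \<in> borel_measurable borel" "\<And>u v. (\<lambda>x. V x u v) \<in> borel_measurable borel"
  shows "(\<lambda>x. SigmaVw b q V \<omega> x) \<in> borel_measurable borel"
  unfolding SigmaVw_def
proof (rule borel_measurable_Max[OF finite_words])
  fix u
  have "(\<lambda>x. \<omega> (xw b x u)) \<in> borel_measurable borel"
    by (rule measurable_compose[OF _ assms(1)]) (simp add: xw_def)
  then show "(\<lambda>x. \<omega> x / \<omega> (xw b x u) * (\<Sum>v\<in>words b q. V x u v)) \<in> borel_measurable borel"
    using assms by measurable
qed

lemma SigmaVw_le:
  assumes "0 < b" "\<And>u. u \<in> words b q \<Longrightarrow> \<omega> x / \<omega> (xw b x u) * (\<Sum>v\<in>words b q. V x u v) \<le> t"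
  shows "SigmaVw b q V \<omega> x \<le> t"
  using assms finite_words[of b q] replicate_zero_in_words[OF assms(1), of q]
  unfolding SigmaVw_def by (subst Max_le_iff) auto

lemma sigma_le:
  assumes "weight \<omega>" "admissible b \<gamma> \<psi> q V"
    and "(\<lambda>x. SigmaVw b q V \<omega> x) \<in> borel_measurable borel"
    and "\<And>x. x \<in> {0..<1} \<Longrightarrow> SigmaVw b q V \<omega> x \<le> t"
  shows "sigma b \<gamma> \<psi> q \<le> ereal t"
proof -
  have "esssup (restrict_space lborel {0..<1}) (\<lambda>x. ereal (SigmaVw b q V \<omega> x)) \<le> ereal t"
  proof (rule esssup_I)
    show "(\<lambda>x. ereal (SigmaVw b q V \<omega> x)) \<in> borel_measurable (restrict_space lborel {0..<1})"
      using assms(3) by (intro measurable_restrict_space1 borel_measurable_ereal) simp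
    show "AE x in restrict_space lborel {0..<1}. ereal (SigmaVw b q V \<omega> x) \<le> ereal t"
      using assms(4) by (intro AE_I2) (simp add: space_restrict_space)
  qed
  then show ?thesis unfolding sigma_def using assms(1,2) by (blast intro: Inf_lower2)
qed

lemma sum_le_two_points:
  fixes f :: "'a \<Rightarrow> real"
  assumes "finite A" "\<And>v. v \<in> A \<Longrightarrow> f v \<le> (if v = c then C else 0) + (if v = d then D else 0)"
    and "0 \<le> C" "0 \<le> D"
  shows "sum f A \<le> C + D"
proof -
  have "sum f A \<le> (\<Sum>v\<in>A. (if v = c then C else 0) + (if v = d then D else 0))"
    using assms(2) by (rule sum_mono)
  also have "\<dots> = (if c \<in> A then C else 0) + (if d \<in> A then D else 0)"
    using assms(1) by (simp add: sum.distrib)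
  also have "\<dots> \<le> C + D" using assms(3,4) by auto
  finally show ?thesis .
qed

lemma sum_le_one_point:
  fixes f :: "'a \<Rightarrow> real"
  assumes "finite A" "\<And>v. v \<in> A \<Longrightarrow> f v \<le> (if v = c then C else 0)" "0 \<le> C"
  shows "sum f A \<le> C"
  using sum_le_two_points[of A f c C c 0] assms by simp

locale tangency_partition =
  fixes b q :: nat and \<gamma> \<epsilon> \<delta> t :: real and \<psi> \<psi>' :: "real \<Rightarrow> real" and K0 K1 K2 :: "real set"
  assumes b: "1 \<le> b" and \<gamma>: "0 \<le> \<gamma>" "\<gamma> < 1"
    and \<psi>: "\<And>x. (\<psi> has_real_derivative \<psi>' x) (at x)" "continuous_on UNIV \<psi>'"
    and K_borel: "K0 \<in> sets borel" "K1 \<in> sets borel" "K2 \<in> sets borel"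
    and K_disjoint: "K0 \<inter> K1 = {}" "K0 \<inter> K2 = {}" "K1 \<inter> K2 = {}"
    and K_cover: "K0 \<union> K1 \<union> K2 = {0..<1}"
    and \<epsilon>\<delta>: "0 < \<epsilon>" "0 < \<delta>"
    and K0_no_tangency: "\<And>x. x \<in> K0 \<Longrightarrow> e b \<gamma> \<psi> q x \<epsilon> \<delta> = 1"
    and K1_tangencies: "\<And>x. x \<in> K1 \<Longrightarrow> \<exists>a\<in>words b q. \<exists>c\<in>words b q.
          xw b x a \<in> K0 \<and> xw b x c \<in> K0 \<and>
          {(u, v) \<in> Eset b \<gamma> \<psi> q x \<epsilon> \<delta>. u \<noteq> v} \<subseteq> {(a, c), (c, a)}"
    and K2_tangencies: "\<And>x. x \<in> K2 \<Longrightarrow> \<exists>a\<in>words b q. \<exists>c\<in>words b q. \<exists>d\<in>words b q.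
          xw b x a \<in> K0 \<and> xw b x c \<in> K0 \<and> xw b x d \<in> K1 \<and>
          {(u, v) \<in> Eset b \<gamma> \<psi> q x \<epsilon> \<delta>. u \<noteq> v} \<subseteq> {(a, c), (a, d), (c, a), (d, a)}"
    and t_range: "1 < t" "t \<le> 2" "2 \<le> t\<^sup>2"
    and t_equation: "1 / (t\<^sup>2 - 1) + 2 / (t ^ 3 - 2) + 1 = t\<^sup>2"
begin

abbreviation W :: "nat list set" where "W \<equiv> words b q"

abbreviation E :: "real \<Rightarrow> (nat list \<times> nat list) set" where "E x \<equiv> Eset b \<gamma> \<psi> q x \<epsilon> \<delta>"

definition \<beta> :: real where "\<beta> = 1 / (t\<^sup>2 - 1)"

definition \<theta> :: real where "\<theta> = 2 / (t ^ 3 - 2)"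

definition K1_branch :: "nat list \<Rightarrow> real set" where
  "K1_branch v = {x. xw b x v \<in> K1}"

definition tangent_to_K1 :: "nat list \<Rightarrow> real set" where
  "tangent_to_K1 u = {x. \<exists>w\<in>W. x \<in> K1_branch w \<and> (u, w) \<in> E x}"

definition \<omega> :: "real \<Rightarrow> real" where
  "\<omega> x = (if x \<in> K0 then 1 else if x \<in> K1 then t / 2 else 1 / t)"

text \<open>At a point of \<open>K2\<close> the tangency of \<open>a\<close> with the word \<open>d\<close> leading into \<open>K1\<close> is weighted
  \<open>\<theta>\<close> and \<open>1/\<theta>\<close>, and when it is present the tangency \<open>a\<close>--\<open>c\<close> is weighted \<open>\<beta>\<close> and \<open>1/\<beta>\<close>.
  The row of \<open>a\<close> then sums to \<open>1 + \<beta> + \<theta>\<close>, and the defining equation of \<open>t\<close> says that this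
  is \<open>t\<^sup>2\<close>, exactly what the ratio \<open>\<omega> x / \<omega> (xw b x a) = 1/t\<close> allows.\<close>
definition V :: "real \<Rightarrow> nat list \<Rightarrow> nat list \<Rightarrow> real" where
  "V x u v = (if u = v then 1 else if (u, v) \<notin> E x then 0 else if x \<notin> K2 then 1
     else if x \<in> K1_branch v then \<theta> else if x \<in> K1_branch u then 1 / \<theta>
     else if x \<in> tangent_to_K1 u then \<beta> else if x \<in> tangent_to_K1 v then 1 / \<beta> else 1)"

lemma t_cube: "2 < t ^ 3"
proof -
  have "2 * t \<le> t\<^sup>2 * t" using t_range(1,3) by (intro mult_right_mono) auto
  moreover have "t ^ 3 = t\<^sup>2 * t" by (simp add: power2_eq_square power3_eq_cube)
  ultimately show ?thesis using t_range(1) by linarith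
qed

lemma \<beta>_pos: "0 < \<beta>" and \<theta>_pos: "0 < \<theta>"
  using t_range(3) t_cube by (simp_all add: \<beta>_def \<theta>_def)

lemma \<beta>_\<theta>_sum: "1 + \<beta> + \<theta> = t\<^sup>2"
  using t_equation by (simp add: \<beta>_def \<theta>_def)

lemma \<omega>_K0: "y \<in> K0 \<Longrightarrow> \<omega> y = 1"
  and \<omega>_K1: "y \<in> K1 \<Longrightarrow> \<omega> y = t / 2"
  and \<omega>_K2: "y \<in> K2 \<Longrightarrow> \<omega> y = 1 / t"
  using K_disjoint by (auto simp: \<omega>_def)

lemma \<omega>_pos: "0 < \<omega> y"
  using t_range(1) by (simp add: \<omega>_def)

lemma \<omega>_le_1: "\<omega> y \<le> 1"
  using t_range(1,2) by (simp add: \<omega>_def)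

lemma inverse_\<omega>_le: "1 / \<omega> y \<le> t"
proof -
  have "1 / t \<le> t / 2" using t_range(1,3) by (simp add: field_simps power2_eq_square)
  then have "1 / t \<le> \<omega> y" using t_range(1) by (auto simp: \<omega>_def)
  then show ?thesis using t_range(1) \<omega>_pos[of y] by (simp add: field_simps)
qed

lemma V_nonneg: "0 \<le> V x u v"
  using \<beta>_pos \<theta>_pos by (simp add: V_def)

lemma V_not_tangent: "u \<noteq> v \<Longrightarrow> (u, v) \<notin> E x \<Longrightarrow> V x u v = 0"
  by (simp add: V_def)

lemma V_outside_K2: "x \<notin> K2 \<Longrightarrow> u \<noteq> v \<Longrightarrow> (u, v) \<in> E x \<Longrightarrow> V x u v = 1"
  by (simp add: V_def)

lemma row_sum_eq: "u \<in> W \<Longrightarrow> (\<Sum>v\<in>W. V x u v) = 1 + (\<Sum>v\<in>W - {u}. V x u v)"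
  using sum.remove[OF finite_words, of u b q "V x u"] by (simp add: V_def)

lemma row_bound_no_tangency:
  assumes "u \<in> W" "\<And>v. (u, v) \<in> E x \<Longrightarrow> v = u"
  shows "\<omega> x / \<omega> (xw b x u) * (\<Sum>v\<in>W. V x u v) \<le> t"
proof -
  have "(\<Sum>v\<in>W - {u}. V x u v) = 0"
    using assms(2) by (intro sum.neutral ballI V_not_tangent) blast+
  then have "\<omega> x / \<omega> (xw b x u) * (\<Sum>v\<in>W. V x u v) = \<omega> x * (1 / \<omega> (xw b x u))"
    using row_sum_eq[OF assms(1)] by simp
  also have "\<dots> \<le> 1 * t"
    using \<omega>_le_1 inverse_\<omega>_le \<omega>_pos by (intro mult_mono) (auto simp: less_imp_le)
  finally show ?thesis by simp
qed

lemma borel_measurable_\<omega>: "\<omega> \<in> borel_measurable borel"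
  unfolding \<omega>_def using K_borel by measurable

lemma K1_branch_borel: "K1_branch w \<in> sets borel"
proof -
  have "(\<lambda>x. xw b x w) \<in> borel_measurable borel" unfolding xw_def by measurable
  moreover have "K1_branch w = (\<lambda>x. xw b x w) -` K1" unfolding K1_branch_def by auto
  ultimately show ?thesis using measurable_sets_borel[OF _ K_borel(2)] by simp
qed

lemma tangent_to_K1_borel: "tangent_to_K1 u \<in> sets borel"
proof -
  have "tangent_to_K1 u = (\<Union>w\<in>W. K1_branch w \<inter> {x. (u, w) \<in> E x})"
    unfolding tangent_to_K1_def by auto
  then show ?thesis
    using Eset_pair_borel[OF b \<gamma> \<psi>] K1_branch_borel finite_words by (auto intro: sets.finite_UN)
qed

lemma borel_measurable_V: "(\<lambda>x. V x u v) \<in> borel_measurable borel"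
proof (cases "u = v")
  case False
  then have "(\<lambda>x. V x u v) = (\<lambda>x. if x \<in> {x. (u, v) \<in> E x} then
      (if x \<in> K2 then (if x \<in> K1_branch v then \<theta> else if x \<in> K1_branch u then 1 / \<theta>
        else if x \<in> tangent_to_K1 u then \<beta> else if x \<in> tangent_to_K1 v then 1 / \<beta> else 1) else 1)
      else 0)"
    by (auto simp: V_def fun_eq_iff)
  then show ?thesis
    using Eset_pair_borel[OF b \<gamma> \<psi>] K_borel(3) K1_branch_borel tangent_to_K1_borel
    by (simp only:) (intro measurable_If_set measurable_const; simp)
qed (simp add: V_def)

lemma weight_\<omega>: "weight \<omega>"
  unfolding weight_def
proof (intro conjI)
  show "\<omega> \<in> borel_measurable (restrict_space borel {0..<1})"
    by (rule measurable_restrict_space1[OF borel_measurable_\<omega>])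
  show "\<exists>M. \<forall>x\<in>{0..<1}. \<omega> x \<le> M \<and> 1 / \<omega> x \<le> M"
  proof (intro exI ballI conjI)
    fix x :: real
    show "\<omega> x \<le> t" using \<omega>_le_1[of x] t_range(1) by linarith
    show "1 / \<omega> x \<le> t" by (rule inverse_\<omega>_le)
  qed
qed (use \<omega>_pos in auto)

lemma row_bound_K0:
  assumes x: "x \<in> K0" and u: "u \<in> W"
  shows "\<omega> x / \<omega> (xw b x u) * (\<Sum>v\<in>W. V x u v) \<le> t"
proof (rule row_bound_no_tangency[OF u])
  fix v assume uv: "(u, v) \<in> E x"
  have fin: "finite {l. (u, l) \<in> E x}"
    by (rule finite_subset[OF _ finite_words]) (auto dest: Eset_in_words)
  have "card {l. (u, l) \<in> E x} \<le> e b \<gamma> \<psi> q x \<epsilon> \<delta>"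
    unfolding e_def using u finite_words by (intro Max_ge) auto
  moreover have "card {u, v} \<le> card {l. (u, l) \<in> E x}"
    using uv Eset_refl[OF _ _ _ u] b \<epsilon>\<delta> by (intro card_mono[OF fin]) auto
  ultimately have "card {u, v} \<le> 1"
    using K0_no_tangency[OF x] by linarith
  then show "v = u" by (cases "u = v") auto
qed

lemma row_bound_K1:
  assumes x: "x \<in> K1" and u: "u \<in> W"
  shows "\<omega> x / \<omega> (xw b x u) * (\<Sum>v\<in>W. V x u v) \<le> t"
proof -
  obtain a c where ac: "xw b x a \<in> K0" "xw b x c \<in> K0"
    and tangencies: "{(u, v) \<in> E x. u \<noteq> v} \<subseteq> {(a, c), (c, a)}"
    using K1_tangencies[OF x] by blast
  have "x \<notin> K2" using x K_disjoint(3) by auto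
  show ?thesis
  proof (cases "u = a \<or> u = c")
    case True
    have rest: "(\<Sum>v\<in>W - {u}. V x u v) \<le> 1"
    proof (rule sum_le_one_point[OF _ _ zero_le_one])
      fix v assume v: "v \<in> W - {u}"
      show "V x u v \<le> (if v = (if u = a then c else a) then 1 else 0)"
        using tangencies V_outside_K2[OF \<open>x \<notin> K2\<close>, of u v] V_not_tangent[of u v x] v
        by (cases "(u, v) \<in> E x") auto
    qed (simp add: finite_words)
    have "\<omega> (xw b x u) = 1" using True ac \<omega>_K0 by auto
    then have "\<omega> x / \<omega> (xw b x u) * (\<Sum>v\<in>W. V x u v) = t / 2 * (1 + (\<Sum>v\<in>W - {u}. V x u v))"
      using row_sum_eq[OF u] \<omega>_K1[OF x] by simp
    also have "\<dots> \<le> t / 2 * (1 + 1)" using rest t_range(1) by (intro mult_left_mono) auto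
    finally show ?thesis by simp
  next
    case False
    then show ?thesis using tangencies by (intro row_bound_no_tangency[OF u]) auto
  qed
qed

context
  fixes x :: real and a c d :: "nat list"
  assumes x: "x \<in> K2" and a: "xw b x a \<in> K0" and c: "xw b x c \<in> K0" and d: "xw b x d \<in> K1"
    and tangencies: "{(u, v) \<in> E x. u \<noteq> v} \<subseteq> {(a, c), (a, d), (c, a), (d, a)}"
begin

lemma K2_distinct: "a \<noteq> d" "c \<noteq> d"
  using a c d K_disjoint(1) by auto

lemma K2_branches: "x \<notin> K1_branch a" "x \<notin> K1_branch c" "x \<in> K1_branch d"
  using a c d K_disjoint(1) by (auto simp: K1_branch_def)

lemma K2_not_tangent_to_K1_c:
  assumes "c \<noteq> a"
  shows "x \<notin> tangent_to_K1 c"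
proof
  assume "x \<in> tangent_to_K1 c"
  then obtain w where w: "x \<in> K1_branch w" "(c, w) \<in> E x" by (auto simp: tangent_to_K1_def)
  then have "w \<noteq> c" using K2_branches by auto
  then have "w = a" using w(2) tangencies assms K2_distinct by auto
  then show False using w(1) K2_branches by simp
qed

lemma K2_tangent_to_K1_a: "(a, d) \<in> E x \<Longrightarrow> x \<in> tangent_to_K1 a"
  using K2_branches Eset_in_words by (auto simp: tangent_to_K1_def)

lemma V_K2_a_c: "c \<noteq> a \<Longrightarrow>
    V x a c = (if (a, c) \<in> E x then if x \<in> tangent_to_K1 a then \<beta> else 1 else 0)"
  using x K2_branches K2_not_tangent_to_K1_c by (simp add: V_def)

lemma V_K2_c_a: "c \<noteq> a \<Longrightarrow>
    V x c a = (if (c, a) \<in> E x then if x \<in> tangent_to_K1 a then 1 / \<beta> else 1 else 0)"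
  using x K2_branches K2_not_tangent_to_K1_c by (simp add: V_def)

lemma V_K2_a_d: "V x a d = (if (a, d) \<in> E x then \<theta> else 0)"
  using x K2_branches K2_distinct by (simp add: V_def)

lemma V_K2_d_a: "V x d a = (if (d, a) \<in> E x then 1 / \<theta> else 0)"
  using x K2_branches K2_distinct by (simp add: V_def)

lemma V_K2_mult:
  assumes "(u, v) \<in> E x"
  shows "V x u v * V x v u = 1"
proof (cases "u = v")
  case False
  then have "(u, v) \<in> {(a, c), (a, d), (c, a), (d, a)}" using assms tangencies by auto
  moreover have "(v, u) \<in> E x" using assms by (rule Eset_sym)
  ultimately show ?thesis
    using assms False V_K2_a_c V_K2_c_a V_K2_a_d V_K2_d_a \<beta>_pos \<theta>_pos by auto
qed (simp add: V_def)

lemma row_bound_K2: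
  assumes u: "u \<in> W"
  shows "\<omega> x / \<omega> (xw b x u) * (\<Sum>v\<in>W. V x u v) \<le> t"
proof -
  have reduce: "\<omega> x / \<omega> (xw b x u) * (\<Sum>v\<in>W. V x u v) \<le> t"
    if "(\<Sum>v\<in>W. V x u v) \<le> t\<^sup>2 * \<omega> (xw b x u)"
  proof -
    have "\<omega> x / \<omega> (xw b x u) * (\<Sum>v\<in>W. V x u v) \<le> 1 / t / \<omega> (xw b x u) * (t\<^sup>2 * \<omega> (xw b x u))"
      unfolding \<omega>_K2[OF x] using that \<omega>_pos[of "xw b x u"] t_range(1) by (intro mult_left_mono) auto
    also have "\<dots> = t" using \<omega>_pos[of "xw b x u"] t_range(1) by (simp add: power2_eq_square)
    finally show ?thesis .
  qed
  consider "u = a" | "u = c" "c \<noteq> a" | "u = d" | "u \<notin> {a, c, d}" by blast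
  then show ?thesis
  proof cases
    case 1
    let ?near = "x \<in> tangent_to_K1 a"
    have "(\<Sum>v\<in>W - {a}. V x a v) \<le> (if ?near then \<beta> else 1) + (if ?near then \<theta> else 0)"
    proof (rule sum_le_two_points[where c = c and d = d])
      fix v assume v: "v \<in> W - {a}"
      show "V x a v \<le> (if v = c then if ?near then \<beta> else 1 else 0)
        + (if v = d then if ?near then \<theta> else 0 else 0)"
      proof (cases "(a, v) \<in> E x")
        case True
        then have "v = c \<or> v = d" using tangencies v by auto
        then show ?thesis
          using True v V_K2_a_c V_K2_a_d K2_distinct K2_tangent_to_K1_a by auto
      qed (use v V_not_tangent \<beta>_pos \<theta>_pos in auto)
    qed (use \<beta>_pos \<theta>_pos in \<open>auto simp: finite_words\<close>)
    then have "(\<Sum>v\<in>W. V x u v) \<le> t\<^sup>2"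
      using 1 row_sum_eq[OF u] \<beta>_\<theta>_sum t_range(3) by (auto split: if_splits)
    then show ?thesis using 1 a \<omega>_K0 by (intro reduce) simp
  next
    case 2
    have "(\<Sum>v\<in>W - {c}. V x c v) \<le> t\<^sup>2 - 1"
    proof (rule sum_le_one_point[where c = a])
      fix v assume v: "v \<in> W - {c}"
      have "1 / \<beta> = t\<^sup>2 - 1" "1 \<le> t\<^sup>2 - 1" using t_range(3) by (auto simp: \<beta>_def)
      then show "V x c v \<le> (if v = a then t\<^sup>2 - 1 else 0)"
        using tangencies v 2 K2_distinct V_K2_c_a V_not_tangent[of c v x]
        by (cases "(c, v) \<in> E x") auto
    qed (use t_range(3) in \<open>auto simp: finite_words\<close>)
    then show ?thesis using 2 c row_sum_eq[OF u] \<omega>_K0 by (intro reduce) simp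
  next
    case 3
    have "(\<Sum>v\<in>W - {d}. V x d v) \<le> 1 / \<theta>"
    proof (rule sum_le_one_point[where c = a])
      fix v assume v: "v \<in> W - {d}"
      show "V x d v \<le> (if v = a then 1 / \<theta> else 0)"
        using tangencies v K2_distinct V_K2_d_a V_not_tangent[of d v x] \<theta>_pos
        by (cases "(d, v) \<in> E x") auto
    qed (use \<theta>_pos in \<open>auto simp: finite_words\<close>)
    moreover have "1 + 1 / \<theta> = t\<^sup>2 * \<omega> (xw b x d)"
      unfolding \<omega>_K1[OF d] by (simp add: \<theta>_def power2_eq_square power3_eq_cube field_simps)
    ultimately have "(\<Sum>v\<in>W. V x u v) \<le> t\<^sup>2 * \<omega> (xw b x u)"
      using row_sum_eq[OF u, of x] unfolding 3 by linarith
    then show ?thesis by (rule reduce)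
  next
    case 4
    then show ?thesis using tangencies by (intro row_bound_no_tangency[OF u]) auto
  qed
qed

end

lemma admissible_V: "admissible b \<gamma> \<psi> q V"
  unfolding admissible_def
proof (intro conjI)
  show "\<forall>u\<in>W. \<forall>v\<in>W. (\<lambda>x. V x u v) \<in> borel_measurable (restrict_space borel {0..<1})"
    by (blast intro: measurable_restrict_space1 borel_measurable_V)
  show "\<forall>x\<in>{0..<1}. \<forall>u\<in>W. \<forall>v\<in>W. 0 \<le> V x u v"
    by (simp add: V_nonneg)
  have "1 \<le> V x u v * V x v u" if "(u, v) \<in> E x" for x u v
  proof (cases "x \<in> K2")
    case True
    then obtain a c d where "xw b x a \<in> K0" "xw b x c \<in> K0" "xw b x d \<in> K1"
      "{(u, v) \<in> E x. u \<noteq> v} \<subseteq> {(a, c), (a, d), (c, a), (d, a)}"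
      using K2_tangencies by blast
    from V_K2_mult[OF True this that] show ?thesis by simp
  qed (use that Eset_sym[OF that] in \<open>simp add: V_def\<close>)
  then show "\<exists>\<epsilon>'>0. \<exists>\<delta>'>0. \<forall>x\<in>{0..<1}.
      \<forall>(u, v)\<in>Eset b \<gamma> \<psi> q x \<epsilon>' \<delta>'. 1 \<le> V x u v * V x v u"
    using \<epsilon>\<delta> by (intro exI[of _ \<epsilon>] exI[of _ \<delta>]) auto
qed

lemma SigmaVw_le_t:
  assumes "x \<in> {0..<1}"
  shows "SigmaVw b q V \<omega> x \<le> t"
proof (rule SigmaVw_le)
  show "0 < b" using b by simp
  fix u assume u: "u \<in> W"
  consider "x \<in> K0" | "x \<in> K1" | "x \<in> K2" using assms K_cover by blast
  then show "\<omega> x / \<omega> (xw b x u) * (\<Sum>v\<in>W. V x u v) \<le> t"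
  proof cases
    case 1
    then show ?thesis by (rule row_bound_K0[OF _ u])
  next
    case 2
    then show ?thesis by (rule row_bound_K1[OF _ u])
  next
    case 3
    then obtain a c d where "xw b x a \<in> K0" "xw b x c \<in> K0" "xw b x d \<in> K1"
      "{(u, v) \<in> E x. u \<noteq> v} \<subseteq> {(a, c), (a, d), (c, a), (d, a)}"
      using K2_tangencies by blast
    from row_bound_K2[OF 3 this u] show ?thesis .
  qed
qed

lemma sigma_le_t: "sigma b \<gamma> \<psi> q \<le> ereal t"
  using weight_\<omega> admissible_V borel_measurable_SigmaVw[OF borel_measurable_\<omega> borel_measurable_V]
    SigmaVw_le_t
  by (rule sigma_le)

end

theorem lemma2p12:
  fixes b q :: nat and \<gamma> \<epsilon> \<delta> :: real and \<psi> :: "real \<Rightarrow> real" and K0 K1 K2 :: "real set"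
  assumes std: "standing b \<gamma> \<psi>"
    and q: "q \<ge> 1"
    and Kmeas: "K0 \<in> sets borel" "K1 \<in> sets borel" "K2 \<in> sets borel"
    and Kdisj: "K0 \<inter> K1 = {}" "K0 \<inter> K2 = {}" "K1 \<inter> K2 = {}"
    and Kunion: "K0 \<union> K1 \<union> K2 = {0..<1}"
    and pos: "\<epsilon> > 0" "\<delta> > 0"
    and i: "\<forall>x\<in>K0. e b \<gamma> \<psi> q x \<epsilon> \<delta> = 1"
    and ii: "\<forall>x\<in>K1. \<exists>a\<in>words b q. \<exists>c\<in>words b q.
               xw b x a \<in> K0 \<and> xw b x c \<in> K0 \<and>
               {(u, v) \<in> Eset b \<gamma> \<psi> q x \<epsilon> \<delta>. u \<noteq> v} \<subseteq> {(a, c), (c, a)}"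
    and iii: "\<forall>x\<in>K2. \<exists>a\<in>words b q. \<exists>c\<in>words b q. \<exists>d\<in>words b q.
               xw b x a \<in> K0 \<and> xw b x c \<in> K0 \<and> xw b x d \<in> K1 \<and>
               {(u, v) \<in> Eset b \<gamma> \<psi> q x \<epsilon> \<delta>. u \<noteq> v} \<subseteq> {(a, c), (a, d), (c, a), (d, a)}"
  shows "\<exists>t::real. t > 1 \<and> t ^ 3 > 2 \<and> 1 / (t\<^sup>2 - 1) + 2 / (t ^ 3 - 2) + 1 = t\<^sup>2 \<and>
           (\<forall>s::real. s > 1 \<and> s ^ 3 > 2 \<and> 1 / (s\<^sup>2 - 1) + 2 / (s ^ 3 - 2) + 1 = s\<^sup>2 \<longrightarrow> s = t) \<and>
           sigma b \<gamma> \<psi> q \<le> ereal t \<and> t < 1.61"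
proof -
  obtain \<psi>' where \<psi>': "\<And>x. (\<psi> has_real_derivative \<psi>' x) (at x)" "continuous_on UNIV \<psi>'"
    and b: "1 \<le> b" and \<gamma>: "0 \<le> \<gamma>" "\<gamma> < 1"
    using standingE[OF std] by blast
  obtain t where root: "8/5 \<le> t" "t < 1.61" "t_eqn t = 0" using t_eqn_root by blast
  have "(8/5)\<^sup>2 \<le> t\<^sup>2" using root(1) by (intro power_mono) auto
  then have t_range: "1 < t" "t \<le> 2" "2 \<le> t\<^sup>2" using root(1,2) by (simp_all add: power2_eq_square)
  have t_eq: "1 / (t\<^sup>2 - 1) + 2 / (t ^ 3 - 2) + 1 = t\<^sup>2" using root(3) by (simp add: t_eqn_def)
  interpret tp: tangency_partition b q \<gamma> \<epsilon> \<delta> t \<psi> \<psi>' K0 K1 K2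
    by (rule tangency_partition.intro[OF b \<gamma> \<psi>' Kmeas Kdisj Kunion pos
          i[rule_format] ii[rule_format] iii[rule_format] t_range t_eq])
  have unique: "s = t" if "1 < s" "2 < s ^ 3" "1 / (s\<^sup>2 - 1) + 2 / (s ^ 3 - 2) + 1 = s\<^sup>2" for s
  proof -
    have "t_eqn s = 0" using that(3) by (simp add: t_eqn_def)
    from t_eqn_root_unique[OF that(1,2) this t_range(1) tp.t_cube root(3)] show ?thesis .
  qed
  show ?thesis
  proof (intro exI[of _ t] conjI allI impI)
    fix s :: real assume "1 < s \<and> 2 < s ^ 3 \<and> 1 / (s\<^sup>2 - 1) + 2 / (s ^ 3 - 2) + 1 = s\<^sup>2"
    then show "s = t" using unique by blast
  qed (use t_range(1) tp.t_cube t_eq tp.sigma_le_t root(2) in simp_all)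
qed

end
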